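(* Let $T$ be the linear operator on $L^2(0,\pi/2)$ defined by $(Tf)(v)=\int_0^{(\pi/2)-v} f(u)\,du$, and let $n\ge 1$ be an integer. Then $T^n$ is a compact self-adjoint operator on $L^2(0,\pi/2)$, whose eigenvalues are exactly $1/(4k+1)^n$ for $k\in\mathbf{Z}$, each of multiplicity one, with corresponding eigenfunctions $u\mapsto\cos((4k+1)u)$. *)

theory Defs
  imports "HOL-Analysis.Analysis"
begin

text \<open>Real L^2(0,pi/2): square-integrable functions on [0,pi/2] (equality is a.e.).\<close>

abbreviation I :: "real measure" where
  "I \<equiv> lebesgue_on {0..pi/2}"

definition L2 :: "(real \<Rightarrow> real) set" where
  "L2 = {f. f \<in> borel_measurable I \<and> integrable I (\<lambda>x. (f x)\<^sup>2)}"

definition ae_eq :: "(real \<Rightarrow> real) \<Rightarrow> (real \<Rightarrow> real) \<Rightarrow> bool" where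
  "ae_eq f g \<longleftrightarrow> (AE x in I. f x = g x)"

definition inner_L2 :: "(real \<Rightarrow> real) \<Rightarrow> (real \<Rightarrow> real) \<Rightarrow> real" where
  "inner_L2 f g = (\<integral>x. f x * g x \<partial>I)"

definition norm_L2 :: "(real \<Rightarrow> real) \<Rightarrow> real" where
  "norm_L2 f = sqrt (inner_L2 f f)"

definition Top :: "(real \<Rightarrow> real) \<Rightarrow> (real \<Rightarrow> real)" where
  "Top f = (\<lambda>v. LINT u:{0..pi/2 - v}|lebesgue. f u)"

definition compact_op_L2 :: "((real \<Rightarrow> real) \<Rightarrow> (real \<Rightarrow> real)) \<Rightarrow> bool" where
  "compact_op_L2 S \<longleftrightarrow>
     (\<forall>f\<in>L2. S f \<in> L2) \<and>
     (\<forall>f\<in>L2. \<forall>g\<in>L2. \<forall>a b. ae_eq (S (\<lambda>x. a * f x + b * g x)) (\<lambda>x. a * S f x + b * S g x)) \<and>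
     (\<forall>f\<in>L2. \<forall>g\<in>L2. ae_eq f g \<longrightarrow> ae_eq (S f) (S g)) \<and>
     (\<forall>F :: nat \<Rightarrow> real \<Rightarrow> real. (\<forall>k. F k \<in> L2) \<and> bounded (range (\<lambda>k. norm_L2 (F k))) \<longrightarrow>
        (\<exists>r g. strict_mono r \<and> g \<in> L2 \<and>
               (\<lambda>k. norm_L2 (\<lambda>x. S (F (r k)) x - g x)) \<longlonglongrightarrow> 0))"

definition self_adjoint_L2 :: "((real \<Rightarrow> real) \<Rightarrow> (real \<Rightarrow> real)) \<Rightarrow> bool" where
  "self_adjoint_L2 S \<longleftrightarrow> (\<forall>f\<in>L2. \<forall>g\<in>L2. inner_L2 (S f) g = inner_L2 f (S g))"

definition eigenvalue_L2 :: "((real \<Rightarrow> real) \<Rightarrow> (real \<Rightarrow> real)) \<Rightarrow> real \<Rightarrow> bool" where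
  "eigenvalue_L2 S c \<longleftrightarrow> (\<exists>f\<in>L2. \<not> ae_eq f (\<lambda>x. 0) \<and> ae_eq (S f) (\<lambda>x. c * f x))"

end

theory Submission
  imports Defs "HOL-Complex_Analysis.Great_Picard"
begin

text \<open>
  T is the integral operator with the symmetric kernel [u + v <= pi/2] on [0, pi/2]^2, hence
  self-adjoint by Fubini. Each Tf is continuous, and for f in an L2-ball the functions Tf are
  uniformly bounded and equicontinuous, so T and all its powers are compact by Arzela-Ascoli.

  If Tg = lam g with g continuous, then g' (v) = - g (pi/2 - v) / lam, so g'' = - g / lam^2 with
  g' (0) = 0, i.e. g = g (0) cos (v / lam); evaluating (Tg) (0) = lam g (0) then forces
  sin (pi / (2 lam)) = 1, that is 1 / lam = 4k + 1. T is injective because Tf = 0 makes every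
  integral of f over [0, x] vanish.

  Now let T^n f = c f with f nonzero. Then c is nonzero and T^(2n) f = a^n f for a = c^(2/n) > 0.
  For d = T^2 f - a f the numbers X i = <T^(2i) f, d> satisfy X (i+1) - a X i = |T^i d|^2 >= 0
  and X n = a^n X 0, so all these differences vanish; in particular |d|^2 = 0, i.e. T^2 f = a f.
  Hence Tf + sqrt a f and Tf - sqrt a f are eigenvectors of T for the eigenvalues sqrt a and
  - sqrt a; as 1/(4k+1) is never equal to -1/(4k'+1), one of them vanishes, so f is an
  eigenvector of T.
\<close>

section \<open>Square-integrable functions on [0, pi/2]\<close>

abbreviation J :: "real set" where "J \<equiv> {0..pi/2}"

lemma finite_measure_I: "finite_measure I"
  by (rule finite_measure_lebesgue_on) simp

lemma L2D:
  assumes "f \<in> L2"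
  shows "f \<in> borel_measurable I" "integrable I (\<lambda>x. (f x)\<^sup>2)"
  using assms by (auto simp: L2_def)

lemma integrable_L2: "f \<in> L2 \<Longrightarrow> integrable I f"
  by (rule finite_measure.square_integrable_imp_integrable[OF finite_measure_I]) (auto dest: L2D)

lemma integrable_mult_L2:
  assumes "f \<in> L2" "g \<in> L2"
  shows "integrable I (\<lambda>x. f x * g x)"
proof (rule Bochner_Integration.integrable_bound)
  show "integrable I (\<lambda>x. (f x)\<^sup>2 + (g x)\<^sup>2)"
    using assms by (simp add: L2D)
  show "(\<lambda>x. f x * g x) \<in> borel_measurable I"
    using L2D(1)[OF assms(1)] L2D(1)[OF assms(2)] by simp
  show "AE x in I. norm (f x * g x) \<le> norm ((f x)\<^sup>2 + (g x)\<^sup>2)"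
  proof (rule AE_I2)
    fix x
    have "2 * (\<bar>f x\<bar> * \<bar>g x\<bar>) \<le> (f x)\<^sup>2 + (g x)\<^sup>2"
      using sum_squares_bound[of "\<bar>f x\<bar>" "\<bar>g x\<bar>"] by simp
    moreover have "0 \<le> \<bar>f x\<bar> * \<bar>g x\<bar>"
      by simp
    ultimately have "\<bar>f x * g x\<bar> \<le> (f x)\<^sup>2 + (g x)\<^sup>2"
      unfolding abs_mult by linarith
    then show "norm (f x * g x) \<le> norm ((f x)\<^sup>2 + (g x)\<^sup>2)"
      by simp
  qed
qed

lemma L2_lincomb:
  assumes "f \<in> L2" "g \<in> L2"
  shows "(\<lambda>x. a * f x + b * g x) \<in> L2"
proof -
  have "(\<lambda>x. (a * f x + b * g x)\<^sup>2) = (\<lambda>x. a\<^sup>2 * (f x)\<^sup>2 + 2 * a * b * (f x * g x) + b\<^sup>2 * (g x)\<^sup>2)"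
    by (simp add: power2_eq_square algebra_simps)
  then show ?thesis
    using L2D[OF assms(1)] L2D[OF assms(2)] integrable_mult_L2[OF assms] by (simp add: L2_def)
qed

lemma L2_scale: "f \<in> L2 \<Longrightarrow> (\<lambda>x. c * f x) \<in> L2"
  using L2_lincomb[of f f c 0] by simp

lemma continuous_on_imp_L2:
  assumes "continuous_on J g"
  shows "g \<in> L2"
proof -
  have "g \<in> borel_measurable I"
    by (rule continuous_imp_measurable_on_sets_lebesgue[OF assms]) simp
  moreover have "integrable I (\<lambda>x. (g x)\<^sup>2)"
    by (rule continuous_imp_integrable_real) (intro continuous_intros assms)
  ultimately show ?thesis
    by (simp add: L2_def)
qed

lemma borel_measurable_id_I [measurable]: "(\<lambda>x. x) \<in> borel_measurable I"
  by (rule continuous_imp_measurable_on_sets_lebesgue) simp_all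

lemma integrable_I_imp_absolutely_integrable_on:
  assumes "integrable I f" "S \<subseteq> J" "S \<in> sets lebesgue"
  shows "f absolutely_integrable_on S"
  using set_integrable_subset[of lebesgue J f S] assms integrable_restrict_space[of J lebesgue f]
  by (simp add: set_integrable_def)

lemma integrable_on_L2:
  assumes "f \<in> L2" "{c..d} \<subseteq> J"
  shows "f integrable_on {c..d}"
  using integrable_I_imp_absolutely_integrable_on[OF integrable_L2[OF assms(1)] assms(2)]
  by (simp add: set_lebesgue_integral_eq_integral(1))

lemma ae_eq_refl [simp]: "ae_eq f f"
  by (simp add: ae_eq_def)

lemma ae_eq_sym: "ae_eq f g \<Longrightarrow> ae_eq g f"
  unfolding ae_eq_def by (erule eventually_mono) simp

lemma ae_eq_trans [trans]:
  assumes "ae_eq f g" "ae_eq g h"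
  shows "ae_eq f h"
  using assms unfolding ae_eq_def by eventually_elim simp

lemma ae_eq_if_eq_on_J: "(\<And>x. x \<in> J \<Longrightarrow> f x = g x) \<Longrightarrow> ae_eq f g"
  unfolding ae_eq_def by (rule AE_I2) simp

lemma ae_eq_lincomb:
  assumes "ae_eq f f'" "ae_eq g g'"
  shows "ae_eq (\<lambda>x. a * f x + b * g x) (\<lambda>x. a * f' x + b * g' x)"
  using assms unfolding ae_eq_def by eventually_elim simp

lemma ae_eq_scale: "ae_eq f g \<Longrightarrow> ae_eq (\<lambda>x. c * f x) (\<lambda>x. c * g x)"
  unfolding ae_eq_def by (erule eventually_mono) simp

lemma scalar_eq_if_ae_eq_scale:
  assumes "ae_eq (\<lambda>x. c * f x) (\<lambda>x. d * f x)" "\<not> ae_eq f (\<lambda>x. 0)"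
  shows "c = d"
proof (rule ccontr)
  assume "c \<noteq> d"
  then have "ae_eq f (\<lambda>x. 0)"
    using assms(1) unfolding ae_eq_def by (elim eventually_mono) simp
  with assms(2) show False ..
qed

lemma inner_L2_lincomb_left:
  assumes "f \<in> L2" "g \<in> L2" "h \<in> L2"
  shows "inner_L2 (\<lambda>x. a * f x + b * g x) h = a * inner_L2 f h + b * inner_L2 g h"
  using integrable_mult_L2[OF assms(1,3)] integrable_mult_L2[OF assms(2,3)]
  by (simp add: inner_L2_def distrib_right mult.assoc)

lemma inner_L2_scale_left: "inner_L2 (\<lambda>x. c * f x) g = c * inner_L2 f g"
  by (simp add: inner_L2_def mult.assoc)

lemma inner_L2_ae_cong_left:
  assumes "f \<in> L2" "f' \<in> L2" "h \<in> L2" "ae_eq f f'"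
  shows "inner_L2 f h = inner_L2 f' h"
  unfolding inner_L2_def
proof (rule integral_cong_AE)
  show "(\<lambda>x. f x * h x) \<in> borel_measurable I" "(\<lambda>x. f' x * h x) \<in> borel_measurable I"
    using L2D(1)[OF assms(1)] L2D(1)[OF assms(2)] L2D(1)[OF assms(3)] by simp_all
  show "AE x in I. f x * h x = f' x * h x"
    using assms(4) unfolding ae_eq_def by (elim eventually_mono) simp
qed

lemma inner_L2_self_nonneg: "0 \<le> inner_L2 f f"
  unfolding inner_L2_def by (rule integral_nonneg_AE) simp

lemma ae_eq_0_if_inner_L2_self_eq_0:
  assumes "f \<in> L2" "inner_L2 f f = 0"
  shows "ae_eq f (\<lambda>x. 0)"
proof -
  have "AE x in I. f x * f x = 0"
    using integral_nonneg_eq_0_iff_AE[of I "\<lambda>x. f x * f x"] integrable_mult_L2[OF assms(1,1)] assms(2)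
    by (simp add: inner_L2_def)
  then show ?thesis
    unfolding ae_eq_def by (elim eventually_mono) simp
qed

lemma eq_0_if_continuous_on_ae_eq_0:
  assumes g: "continuous_on J g" and "ae_eq g (\<lambda>x. 0)" and x: "x \<in> J"
  shows "g x = 0"
proof -
  have "(\<integral>x. (g x)\<^sup>2 \<partial>I) = (\<integral>x. 0 \<partial>I)"
    using assms(2) L2D(1)[OF continuous_on_imp_L2[OF g]] unfolding ae_eq_def
    by (intro integral_cong_AE) (auto elim: eventually_mono)
  moreover have "continuous_on J (\<lambda>x. (g x)\<^sup>2)"
    using g by (intro continuous_intros)
  ultimately show ?thesis
    using integralL_eq_0_iff[of 0 "pi/2" "\<lambda>x. (g x)\<^sup>2"] x by simp
qed

section \<open>Symmetric operators on L2\<close>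

lemma geometric_growth_first_step:
  fixes X :: "nat \<Rightarrow> real"
  assumes a: "a > 0" and m: "m \<ge> 1"
    and grow: "\<And>i. a * X i \<le> X (Suc i)" and last: "X m = a ^ m * X 0"
  shows "X 1 = a * X 0"
proof -
  have "(X (Suc i) - a * X i) / a ^ Suc i = X (Suc i) / a ^ Suc i - X i / a ^ i" for i
    using a by (simp add: field_simps)
  then have "(\<Sum>i<m. (X (Suc i) - a * X i) / a ^ Suc i) = X m / a ^ m - X 0"
    using sum_lessThan_telescope[of "\<lambda>i. X i / a ^ i" m] by (simp del: power_Suc)
  also have "\<dots> = 0"
    using a by (simp add: last)
  finally have "\<forall>i\<in>{..<m}. (X (Suc i) - a * X i) / a ^ Suc i = 0"
    using a grow by (subst sum_nonneg_eq_0_iff[symmetric]) auto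
  then show ?thesis
    using a m by auto
qed

locale symmetric_L2_operator =
  fixes S :: "(real \<Rightarrow> real) \<Rightarrow> real \<Rightarrow> real"
  assumes L2_closed: "f \<in> L2 \<Longrightarrow> S f \<in> L2"
    and ae_cong: "f \<in> L2 \<Longrightarrow> g \<in> L2 \<Longrightarrow> ae_eq f g \<Longrightarrow> ae_eq (S f) (S g)"
    and lincomb: "f \<in> L2 \<Longrightarrow> g \<in> L2 \<Longrightarrow>
      ae_eq (S (\<lambda>x. a * f x + b * g x)) (\<lambda>x. a * S f x + b * S g x)"
    and self_adjoint: "f \<in> L2 \<Longrightarrow> g \<in> L2 \<Longrightarrow> inner_L2 (S f) g = inner_L2 f (S g)"
begin

lemma pow_L2_closed: "f \<in> L2 \<Longrightarrow> (S ^^ k) f \<in> L2"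
  by (induction k) (simp_all add: L2_closed)

lemma pow_ae_cong:
  assumes "f \<in> L2" "g \<in> L2" "ae_eq f g"
  shows "ae_eq ((S ^^ k) f) ((S ^^ k) g)"
  by (induction k) (simp_all add: assms(3) ae_cong pow_L2_closed assms(1,2))

lemma pow_lincomb:
  assumes f: "f \<in> L2" and g: "g \<in> L2"
  shows "ae_eq ((S ^^ k) (\<lambda>x. a * f x + b * g x)) (\<lambda>x. a * (S ^^ k) f x + b * (S ^^ k) g x)"
proof (induction k)
  case (Suc k)
  let ?f = "(S ^^ k) f" and ?g = "(S ^^ k) g"
  have "ae_eq (S ((S ^^ k) (\<lambda>x. a * f x + b * g x))) (S (\<lambda>x. a * ?f x + b * ?g x))"
    using Suc.IH f g by (intro ae_cong pow_L2_closed L2_lincomb)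
  also have "ae_eq (S (\<lambda>x. a * ?f x + b * ?g x)) (\<lambda>x. a * S ?f x + b * S ?g x)"
    using f g by (intro lincomb pow_L2_closed)
  finally show ?case
    by simp
qed simp

lemma pow_scale: "f \<in> L2 \<Longrightarrow> ae_eq ((S ^^ k) (\<lambda>x. c * f x)) (\<lambda>x. c * (S ^^ k) f x)"
  using pow_lincomb[of f f k c 0] by simp

lemma pow_self_adjoint:
  "f \<in> L2 \<Longrightarrow> g \<in> L2 \<Longrightarrow> inner_L2 ((S ^^ k) f) g = inner_L2 f ((S ^^ k) g)"
proof (induction k arbitrary: g)
  case (Suc k)
  have "inner_L2 ((S ^^ Suc k) f) g = inner_L2 ((S ^^ k) f) (S g)"
    using Suc.prems by (simp add: self_adjoint pow_L2_closed)
  also have "\<dots> = inner_L2 f ((S ^^ Suc k) g)"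
    using Suc by (simp add: L2_closed funpow_swap1)
  finally show ?case .
qed simp

lemma pow_eigen:
  assumes f: "f \<in> L2" and eigen: "ae_eq (S f) (\<lambda>x. c * f x)"
  shows "ae_eq ((S ^^ k) f) (\<lambda>x. c ^ k * f x)"
proof (induction k)
  case (Suc k)
  have "ae_eq (S ((S ^^ k) f)) (S (\<lambda>x. c ^ k * f x))"
    using Suc.IH f by (intro ae_cong pow_L2_closed L2_scale)
  also have "ae_eq (S (\<lambda>x. c ^ k * f x)) (\<lambda>x. c ^ k * S f x)"
    using lincomb[OF f f, of "c ^ k" 0] by simp
  also have "ae_eq (\<lambda>x. c ^ k * S f x) (\<lambda>x. c ^ Suc k * f x)"
    using ae_eq_scale[OF eigen, of "c ^ k"] by (simp add: mult_ac)
  finally show ?case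
    by simp
qed simp

lemma pow_injective:
  assumes inj: "\<And>f. f \<in> L2 \<Longrightarrow> ae_eq (S f) (\<lambda>x. 0) \<Longrightarrow> ae_eq f (\<lambda>x. 0)"
  shows "f \<in> L2 \<Longrightarrow> ae_eq ((S ^^ k) f) (\<lambda>x. 0) \<Longrightarrow> ae_eq f (\<lambda>x. 0)"
proof (induction k arbitrary: f)
  case (Suc k)
  then show ?case
    by (simp add: funpow_Suc_right inj L2_closed del: funpow.simps)
qed simp

lemma inner_pow_double:
  "f \<in> L2 \<Longrightarrow> inner_L2 ((S ^^ (2 * j)) f) f = inner_L2 ((S ^^ j) f) ((S ^^ j) f)"
  by (simp add: mult_2 funpow_add pow_self_adjoint pow_L2_closed)

lemma square_eigen_of_pow_eigen:
  assumes u: "u \<in> L2" and a: "a > 0" and m: "m \<ge> 1"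
    and eigen: "ae_eq ((S ^^ (2 * m)) u) (\<lambda>x. a ^ m * u x)"
  shows "ae_eq (S (S u)) (\<lambda>x. a * u x)"
proof -
  define d where "d x = S (S u) x - a * u x" for x
  have SSu: "S (S u) \<in> L2"
    using u by (intro L2_closed)
  have d: "d \<in> L2"
    using L2_lincomb[OF SSu u, of 1 "- a"] by (simp add: d_def[abs_def])
  define X where "X i = inner_L2 ((S ^^ (2 * i)) u) d" for i
  have X_step: "X (Suc i) - a * X i = inner_L2 ((S ^^ i) d) ((S ^^ i) d)" for i
  proof -
    have "(S ^^ (2 * i)) (S (S u)) = (S ^^ (2 * Suc i)) u"
      by (simp add: funpow_swap1)
    then have "ae_eq ((S ^^ (2 * i)) d) (\<lambda>x. 1 * (S ^^ (2 * Suc i)) u x + (- a) * (S ^^ (2 * i)) u x)"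
      using pow_lincomb[OF SSu u, of "2 * i" 1 "- a"] by (simp add: d_def[abs_def])
    then have "inner_L2 ((S ^^ (2 * i)) d) d
        = inner_L2 (\<lambda>x. 1 * (S ^^ (2 * Suc i)) u x + (- a) * (S ^^ (2 * i)) u x) d"
      using u d by (intro inner_L2_ae_cong_left L2_lincomb pow_L2_closed)
    also have "\<dots> = 1 * X (Suc i) + (- a) * X i"
      unfolding X_def using u d by (intro inner_L2_lincomb_left pow_L2_closed)
    finally show ?thesis
      using d by (simp add: inner_pow_double)
  qed
  have "X m = inner_L2 (\<lambda>x. a ^ m * u x) d"
    unfolding X_def using u d eigen by (intro inner_L2_ae_cong_left pow_L2_closed L2_scale)
  then have "X m = a ^ m * X 0"
    by (simp add: X_def inner_L2_scale_left)
  moreover have "a * X i \<le> X (Suc i)" for i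
    using X_step[of i] inner_L2_self_nonneg[of "(S ^^ i) d"] by simp
  ultimately have "X 1 = a * X 0"
    using a m by (intro geometric_growth_first_step) auto
  then have "inner_L2 d d = 0"
    using X_step[of 0] by simp
  then have "ae_eq d (\<lambda>x. 0)"
    using d by (rule ae_eq_0_if_inner_L2_self_eq_0[rotated])
  then show ?thesis
    unfolding ae_eq_def d_def by (elim eventually_mono) simp
qed

lemma pow_symmetric: "symmetric_L2_operator (S ^^ n)"
  by unfold_locales (simp_all add: pow_L2_closed pow_ae_cong pow_lincomb pow_self_adjoint)

lemma eigen_shift:
  assumes f: "f \<in> L2" and sq: "ae_eq (S (S f)) (\<lambda>x. s * s * f x)"
  shows "ae_eq (S (\<lambda>x. S f x + s * f x)) (\<lambda>x. s * (S f x + s * f x))"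
proof -
  have "ae_eq (S (\<lambda>x. 1 * S f x + s * f x)) (\<lambda>x. 1 * S (S f) x + s * S f x)"
    using f by (intro lincomb L2_closed)
  also have "ae_eq \<dots> (\<lambda>x. 1 * (s * s * f x) + s * S f x)"
    using sq by (rule ae_eq_lincomb) simp
  finally show ?thesis
    by (simp add: algebra_simps)
qed

lemma eigen_of_square_eigen:
  assumes no_opposite: "\<And>c. eigenvalue_L2 S c \<Longrightarrow> \<not> eigenvalue_L2 S (- c)"
    and f: "f \<in> L2" and mu: "mu \<noteq> 0" and sq: "ae_eq (S (S f)) (\<lambda>x. mu * mu * f x)"
  obtains s where "s = mu \<or> s = - mu" "ae_eq (S f) (\<lambda>x. s * f x)"
proof -
  define g where "g s x = S f x + s * f x" for s x
  have g: "g s \<in> L2" for s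
    using L2_lincomb[OF L2_closed[OF f] f, of 1 s] by (simp add: g_def[abs_def])
  have g_eigen: "ae_eq (S (g s)) (\<lambda>x. s * g s x)" if "s * s = mu * mu" for s
    unfolding g_def using eigen_shift[OF f, of s] sq that by simp
  have S_f: "ae_eq (S f) (\<lambda>x. - s * f x)" if "ae_eq (g s) (\<lambda>x. 0)" for s
    using that unfolding ae_eq_def g_def by (elim eventually_mono) (simp add: algebra_simps)
  have "ae_eq (g mu) (\<lambda>x. 0) \<or> ae_eq (g (- mu)) (\<lambda>x. 0)"
  proof (rule ccontr)
    assume "\<not> ?thesis"
    then have "eigenvalue_L2 S mu" "eigenvalue_L2 S (- mu)"
      unfolding eigenvalue_L2_def using g g_eigen[of mu] g_eigen[of "- mu"] by auto
    then show False
      using no_opposite by blast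
  qed
  then show thesis
    using S_f that by force
qed

lemma pow_eigen_imp_eigen:
  assumes inj: "\<And>f. f \<in> L2 \<Longrightarrow> ae_eq (S f) (\<lambda>x. 0) \<Longrightarrow> ae_eq f (\<lambda>x. 0)"
    and no_opposite: "\<And>c. eigenvalue_L2 S c \<Longrightarrow> \<not> eigenvalue_L2 S (- c)"
    and n: "n \<ge> 1" and f: "f \<in> L2" "\<not> ae_eq f (\<lambda>x. 0)"
    and eigen: "ae_eq ((S ^^ n) f) (\<lambda>x. c * f x)"
  obtains lam where "lam \<noteq> 0" "lam ^ n = c" "ae_eq (S f) (\<lambda>x. lam * f x)"
proof -
  have "c \<noteq> 0"
    using eigen f pow_injective[OF inj f(1), of n] by auto
  define a where "a = root n (c\<^sup>2)"
  have a: "a > 0" "a ^ n = c\<^sup>2"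
    using \<open>c \<noteq> 0\<close> n by (simp_all add: a_def real_root_gt_zero)
  interpret pow: symmetric_L2_operator "S ^^ n"
    by (rule pow_symmetric)
  have "ae_eq ((S ^^ (2 * n)) f) (\<lambda>x. a ^ n * f x)"
    using pow.pow_eigen[OF f(1) eigen, of 2] a by (simp add: funpow_mult mult.commute)
  then have "ae_eq (S (S f)) (\<lambda>x. sqrt a * sqrt a * f x)"
    using square_eigen_of_pow_eigen[OF f(1) a(1) n] a(1) by simp
  moreover have "sqrt a \<noteq> 0"
    using a by simp
  ultimately obtain s where s: "s \<noteq> 0" "ae_eq (S f) (\<lambda>x. s * f x)"
    using eigen_of_square_eigen[OF no_opposite f(1)] by (metis neg_0_equal_iff_equal)
  have "ae_eq (\<lambda>x. s ^ n * f x) (\<lambda>x. c * f x)"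
    using ae_eq_trans[OF ae_eq_sym[OF pow_eigen[OF f(1) s(2)]] eigen] .
  then have "s ^ n = c"
    using f(2) by (rule scalar_eq_if_ae_eq_scale)
  with s show thesis
    using that by blast
qed

end

section \<open>Uniqueness results from real analysis\<close>

lemma integral_lborel_eq_0_if_integral_atMost_eq_0:
  fixes g :: "real \<Rightarrow> real"
  assumes g: "integrable lborel g" and zero: "\<And>a. (LINT x:{..a}|lborel. g x) = 0"
  shows "(\<integral>x. g x \<partial>lborel) = 0"
proof -
  have "((\<lambda>a. LINT x:{..a}|lborel. g x) \<longlongrightarrow> (\<integral>x. g x \<partial>lborel)) at_top"
    unfolding set_lebesgue_integral_def by (rule tendsto_integral_at_top) (simp_all add: g)
  then show ?thesis
    by (simp add: zero tendsto_const_iff)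
qed

lemma set_integral_lborel_eq_0_if_integral_atMost_eq_0:
  fixes g :: "real \<Rightarrow> real"
  assumes g: "integrable lborel g" and zero: "\<And>a. (LINT x:{..a}|lborel. g x) = 0"
    and A: "A \<in> sets borel"
  shows "(LINT x:A|lborel. g x) = 0"
proof -
  have sets_eq: "sets borel = sigma_sets UNIV (range (atMost :: real \<Rightarrow> real set))"
    by (simp add: borel_eq_atMost)
  have "Int_stable (range (atMost :: real \<Rightarrow> real set))"
    by (auto simp: Int_stable_def intro!: image_eqI[of _ _ "min _ _"])
  moreover have "range (atMost :: real \<Rightarrow> real set) \<subseteq> Pow UNIV"
    by simp
  moreover have "A \<in> sigma_sets UNIV (range atMost)"
    using A by (simp add: sets_eq)
  ultimately show ?thesis
  proof (induction rule: sigma_sets_induct_disjoint)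
    case (basic A)
    then show ?case
      using zero by auto
  next
    case empty
    then show ?case
      by (simp add: set_lebesgue_integral_def)
  next
    case (compl A)
    then have "A \<in> sets lborel"
      by (simp add: sets_eq)
    then have "integrable lborel (\<lambda>x. indicator A x *\<^sub>R g x)"
      using g by (rule integrable_mult_indicator)
    moreover have "(\<lambda>x. indicator (UNIV - A) x *\<^sub>R g x) = (\<lambda>x. g x - indicator A x *\<^sub>R g x)"
      by (auto simp: indicator_def)
    ultimately have "(LINT x:UNIV - A|lborel. g x) = (\<integral>x. g x \<partial>lborel) - (LINT x:A|lborel. g x)"
      unfolding set_lebesgue_integral_def using g by simp
    then show ?case
      using compl.IH integral_lborel_eq_0_if_integral_atMost_eq_0[OF g zero] by simp
  next
    case (union A)
    then have "A i \<in> sets lborel" for i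
      by (auto simp: sets_eq)
    moreover have "set_integrable lborel (\<Union>i. A i) g"
      using calculation unfolding set_integrable_def by (intro integrable_mult_indicator g) auto
    ultimately have "(LINT x:(\<Union>i. A i)|lborel. g x) = (\<Sum>i. (LINT x:A i|lborel. g x))"
      using union.hyps(1) by (intro lebesgue_integral_countable_add) (auto simp: disjoint_family_on_def)
    then show ?case
      using union.IH by simp
  qed
qed

lemma AE_lborel_eq_0_if_integral_atMost_eq_0:
  fixes g :: "real \<Rightarrow> real"
  assumes g: "integrable lborel g" and zero: "\<And>a. (LINT x:{..a}|lborel. g x) = 0"
  shows "AE x in lborel. g x = 0"
  using g by (rule sigma_finite_measure.density_zero[OF sigma_finite_lborel])
    (simp add: set_integral_lborel_eq_0_if_integral_atMost_eq_0[OF g zero])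

lemma AE_lebesgue_eq_0_if_integral_atMost_eq_0:
  fixes g :: "real \<Rightarrow> real"
  assumes g: "integrable lebesgue g" and zero: "\<And>a. (LINT x:{..a}|lebesgue. g x) = 0"
  shows "AE x in lebesgue. g x = 0"
proof -
  obtain h where h: "h \<in> borel_measurable lborel" and gh: "AE x in lebesgue. g x = h x"
    using completion_ex_borel_measurable_real[of g lborel] borel_measurable_integrable[OF g]
    by (auto intro: AE_completion)
  have h_lebesgue: "h \<in> borel_measurable lebesgue"
    using h by (rule measurable_completion)
  have "integrable lebesgue h"
    using g integrable_cong_AE[OF borel_measurable_integrable[OF g] h_lebesgue gh] by simp
  then have "integrable lborel h"
    using integrable_completion[OF h] by simp
  moreover have "(LINT x:{..a}|lborel. h x) = 0" for a
  proof -
    have "(LINT x:{..a}|lborel. h x) = (LINT x:{..a}|lebesgue. h x)"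
      unfolding set_lebesgue_integral_def using h by (simp add: integral_completion)
    also have "\<dots> = (LINT x:{..a}|lebesgue. g x)"
      unfolding set_lebesgue_integral_def
      using h_lebesgue borel_measurable_integrable[OF g] gh
      by (intro integral_cong_AE borel_measurable_scaleR borel_measurable_indicator)
        (auto elim: eventually_mono)
    finally show ?thesis
      using zero by simp
  qed
  ultimately have "AE x in lborel. h x = 0"
    by (rule AE_lborel_eq_0_if_integral_atMost_eq_0)
  then show ?thesis
    using gh by (auto dest: AE_completion elim: eventually_elim2)
qed

lemma harmonic_oscillator_zero:
  fixes y z :: "real \<Rightarrow> real"
  assumes S: "convex S" and a: "a \<in> S" and w: "w \<noteq> 0"
    and y': "\<And>t. t \<in> S \<Longrightarrow> (y has_real_derivative z t) (at t within S)"
    and z': "\<And>t. t \<in> S \<Longrightarrow> (z has_real_derivative - (w * w) * y t) (at t within S)"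
    and init: "y a = 0" "z a = 0" and x: "x \<in> S"
  shows "y x = 0"
proof -
  define E where "E t = w * w * (y t * y t) + z t * z t" for t
  have "(E has_real_derivative 0) (at t within S)" if "t \<in> S" for t
  proof -
    have "(E has_real_derivative
        w * w * (z t * y t + z t * y t) + (- (w * w) * y t * z t + - (w * w) * y t * z t))
        (at t within S)"
      unfolding E_def[abs_def] by (intro DERIV_add DERIV_cmult DERIV_mult y' z' that)
    then show ?thesis
      by (simp add: algebra_simps)
  qed
  then obtain c where "\<And>t. t \<in> S \<Longrightarrow> E t = c"
    using has_field_derivative_zero_constant[OF S] by blast
  then have "E x = 0"
    using x a init by (metis E_def mult_zero_right add_0)
  then have "w * w * (y x * y x) = 0"
    unfolding E_def by (smt (verit) mult_nonneg_nonneg zero_le_square)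
  then show ?thesis
    using w by simp
qed

section \<open>The operator T\<close>

lemma Top_eq_integral:
  assumes "f \<in> L2" "v \<in> J"
  shows "Top f v = integral {0..pi/2 - v} f"
  unfolding Top_def using assms
  by (intro set_lebesgue_integral_eq_integral(2) integrable_I_imp_absolutely_integrable_on
      integrable_L2) auto

lemma Top_kernel:
  assumes "v \<in> J"
  shows "Top f v = (\<integral>u. indicator {..pi/2} (u + v) * f u \<partial>I)"
proof -
  have "(\<integral>u. indicator {..pi/2} (u + v) * f u \<partial>I)
      = (\<integral>u. indicator J u *\<^sub>R (indicator {..pi/2} (u + v) * f u) \<partial>lebesgue)"
    using integral_restrict_space[of J lebesgue "\<lambda>u. indicator {..pi/2} (u + v) * f u :: real"]
    by simp
  also have "\<dots> = Top f v"
    unfolding Top_def set_lebesgue_integral_def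
    by (rule Bochner_Integration.integral_cong) (use assms in \<open>auto simp: indicator_def\<close>)
  finally show ?thesis ..
qed

lemma continuous_on_Top:
  assumes "f \<in> L2"
  shows "continuous_on J (Top f)"
proof -
  have "continuous_on J (\<lambda>x. integral {0..x} f)"
    using assms by (intro indefinite_integral_continuous_1 integrable_on_L2) auto
  then have "continuous_on J (\<lambda>v. integral {0..pi/2 - v} f)"
    by (rule continuous_on_compose2) (auto simp: continuous_on_diff)
  then show ?thesis
    by (rule continuous_on_eq) (simp add: Top_eq_integral[OF assms])
qed

lemma Top_L2: "f \<in> L2 \<Longrightarrow> Top f \<in> L2"
  by (rule continuous_on_imp_L2, rule continuous_on_Top)

lemma Top_ae_cong:
  assumes "f \<in> L2" "g \<in> L2" "ae_eq f g" "v \<in> J"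
  shows "Top f v = Top g v"
  unfolding Top_kernel[OF assms(4)]
proof (rule integral_cong_AE)
  show "(\<lambda>u. indicator {..pi/2} (u + v) * f u) \<in> borel_measurable I"
    "(\<lambda>u. indicator {..pi/2} (u + v) * g u) \<in> borel_measurable I"
    using L2D(1)[OF assms(1)] L2D(1)[OF assms(2)] by measurable
  show "AE u in I. indicator {..pi/2} (u + v) * f u = indicator {..pi/2} (u + v) * g u"
    using assms(3) unfolding ae_eq_def by (elim eventually_mono) simp
qed

lemma Top_lincomb:
  assumes f: "f \<in> L2" and g: "g \<in> L2" and v: "v \<in> J"
  shows "Top (\<lambda>x. a * f x + b * g x) v = a * Top f v + b * Top g v"
proof -
  have "{0..pi/2 - v} \<subseteq> J"
    using v by auto
  then have "f integrable_on {0..pi/2 - v}" "g integrable_on {0..pi/2 - v}"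
    using f g by (simp_all only: integrable_on_L2)
  then have "(\<lambda>x. a * f x) integrable_on {0..pi/2 - v}" "(\<lambda>x. b * g x) integrable_on {0..pi/2 - v}"
    by (simp_all add: integrable_on_mult_right)
  then show ?thesis
    using f g v by (simp add: Top_eq_integral L2_lincomb integral_add)
qed

lemma integrable_kernel_tensor_L2:
  assumes f: "f \<in> L2" and g: "g \<in> L2"
  shows "integrable (I \<Otimes>\<^sub>M I) (\<lambda>(u, v). indicator {..pi/2} (u + v) * f u * g v)"
proof -
  interpret I: finite_measure I
    by (rule finite_measure_I)
  interpret II: pair_sigma_finite I I
    by unfold_locales
  have [measurable]: "f \<in> borel_measurable I" "g \<in> borel_measurable I"
    using f g by (simp_all add: L2D)
  have "integrable (I \<Otimes>\<^sub>M I) (\<lambda>p. \<bar>f (fst p)\<bar> * \<bar>g (snd p)\<bar>)"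
  proof (rule II.Fubini_integrable)
    show "integrable I (\<lambda>u. \<integral>v. norm (\<bar>f (fst (u, v))\<bar> * \<bar>g (snd (u, v))\<bar>) \<partial>I)"
      using integrable_L2[OF f] by (simp add: abs_mult)
    show "AE u in I. integrable I (\<lambda>v. \<bar>f (fst (u, v))\<bar> * \<bar>g (snd (u, v))\<bar>)"
      using integrable_L2[OF g] by simp
  qed measurable
  then show ?thesis
    by (rule Bochner_Integration.integrable_bound)
      (auto simp: indicator_def abs_mult split: prod.splits)
qed

lemma Top_self_adjoint:
  assumes f: "f \<in> L2" and g: "g \<in> L2"
  shows "inner_L2 (Top f) g = inner_L2 f (Top g)"
proof -
  interpret I: finite_measure I
    by (rule finite_measure_I)
  interpret II: pair_sigma_finite I I
    by unfold_locales
  define F where "F u v = indicator {..pi/2} (u + v) * f u * g v" for u v :: real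
  have "inner_L2 (Top f) g = (\<integral>v. \<integral>u. F u v \<partial>I \<partial>I)"
    unfolding inner_L2_def
  proof (rule Bochner_Integration.integral_cong[OF refl])
    fix v
    assume "v \<in> space I"
    then show "Top f v * g v = (\<integral>u. F u v \<partial>I)"
      by (simp add: Top_kernel F_def)
  qed
  also have "\<dots> = (\<integral>u. \<integral>v. F u v \<partial>I \<partial>I)"
    using integrable_kernel_tensor_L2[OF f g] unfolding F_def by (rule II.Fubini_integral)
  also have "\<dots> = inner_L2 f (Top g)"
    unfolding inner_L2_def
  proof (rule Bochner_Integration.integral_cong[OF refl])
    fix u
    assume "u \<in> space I"
    then have "f u * Top g u = (\<integral>v. f u * (indicator {..pi/2} (v + u) * g v) \<partial>I)"
      by (simp add: Top_kernel)
    also have "\<dots> = (\<integral>v. F u v \<partial>I)"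
      by (rule Bochner_Integration.integral_cong) (simp_all add: F_def add.commute mult_ac)
    finally show "(\<integral>v. F u v \<partial>I) = f u * Top g u" ..
  qed
  finally show ?thesis .
qed

interpretation Top: symmetric_L2_operator Top
proof
  show "f \<in> L2 \<Longrightarrow> Top f \<in> L2" for f
    by (rule Top_L2)
  show "ae_eq (Top f) (Top g)" if "f \<in> L2" "g \<in> L2" "ae_eq f g" for f g
    using that by (intro ae_eq_if_eq_on_J) (rule Top_ae_cong)
  show "ae_eq (Top (\<lambda>x. a * f x + b * g x)) (\<lambda>x. a * Top f x + b * Top g x)"
    if "f \<in> L2" "g \<in> L2" for f g a b
    using that by (intro ae_eq_if_eq_on_J Top_lincomb)
  show "inner_L2 (Top f) g = inner_L2 f (Top g)" if "f \<in> L2" "g \<in> L2" for f g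
    using that by (rule Top_self_adjoint)
qed

lemma Top_injective:
  assumes f: "f \<in> L2" and zero: "ae_eq (Top f) (\<lambda>x. 0)"
  shows "ae_eq f (\<lambda>x. 0)"
proof -
  define F where "F x = indicator J x * f x" for x
  have F: "integrable lebesgue F"
    using integrable_L2[OF f] integrable_restrict_space[of J lebesgue f] by (simp add: F_def[abs_def])
  have "(LINT x:{..a}|lebesgue. F x) = 0" for a
  proof (cases "a < 0")
    case True
    then have "(\<lambda>x. indicator {..a} x *\<^sub>R F x) = (\<lambda>x. 0)"
      by (auto simp: F_def indicator_def)
    then show ?thesis
      by (simp add: set_lebesgue_integral_def)
  next
    case False
    define x where "x = min a (pi/2)"
    have x: "x \<in> J"
      using False by (auto simp: x_def)
    have "(\<lambda>u. indicator {..a} u *\<^sub>R F u) = (\<lambda>u. indicator {0..x} u *\<^sub>R f u)"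
      using False by (auto simp: F_def indicator_def x_def)
    then have "(LINT u:{..a}|lebesgue. F u) = Top f (pi/2 - x)"
      by (simp add: set_lebesgue_integral_def Top_def)
    also have "\<dots> = 0"
      using eq_0_if_continuous_on_ae_eq_0[OF continuous_on_Top[OF f] zero] x by simp
    finally show ?thesis .
  qed
  then have "AE x in lebesgue. F x = 0"
    by (rule AE_lebesgue_eq_0_if_integral_atMost_eq_0[OF F])
  then have "AE x in lebesgue. x \<in> J \<longrightarrow> f x = 0"
    by (elim eventually_mono) (simp add: F_def indicator_def)
  then show ?thesis
    unfolding ae_eq_def using AE_restrict_space_iff[of J lebesgue] by simp
qed

section \<open>Eigenfunctions of T\<close>

abbreviation freq :: "int \<Rightarrow> real" where
  "freq k \<equiv> 4 * of_int k + 1"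

lemma freq_ne_neg: "freq k \<noteq> - freq k'"
proof
  assume "freq k = - freq k'"
  then have "of_int (4 * k + 1) = (of_int (- (4 * k' + 1)) :: real)"
    by simp
  then have "4 * k + 1 = - (4 * k' + 1)"
    by (simp only: of_int_eq_iff)
  then show False
    by presburger
qed

lemma freq_nonzero: "freq k \<noteq> 0"
  using freq_ne_neg[of k k] by linarith

lemma freq_pow_inj:
  assumes n: "n \<ge> 1" and eq: "freq k ^ n = freq k' ^ n"
  shows "k = k'"
proof -
  have "\<bar>freq k\<bar> ^ n = \<bar>freq k'\<bar> ^ n"
    using arg_cong[OF eq, of abs] by (simp only: power_abs)
  then have "\<bar>freq k\<bar> = \<bar>freq k'\<bar>"
    by (rule power_eq_imp_eq_base) (use n in auto)
  then show ?thesis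
    using freq_ne_neg[of k k'] by (auto simp: abs_eq_iff)
qed

lemma integral_cos_scaled:
  fixes m x :: real
  assumes "m \<noteq> 0" "0 \<le> x"
  shows "integral {0..x} (\<lambda>u. cos (m * u)) = sin (m * x) / m"
proof -
  have "((\<lambda>u. sin (m * u) / m) has_vector_derivative cos (m * t)) (at t within {0..x})" for t
    unfolding has_real_derivative_iff_has_vector_derivative[symmetric]
    using assms(1) by (auto intro!: derivative_eq_intros)
  then have "((\<lambda>u. cos (m * u)) has_integral sin (m * x) / m - sin (m * 0) / m) {0..x}"
    using assms(2) by (intro fundamental_theorem_of_calculus) auto
  then show ?thesis
    by (simp add: integral_unique)
qed

lemma cos_freq_L2: "(\<lambda>u. cos (freq k * u)) \<in> L2"
  by (rule continuous_on_imp_L2) (intro continuous_intros)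

lemma cos_freq_not_ae_eq_0: "\<not> ae_eq (\<lambda>u. cos (freq k * u)) (\<lambda>x. 0)"
proof
  assume zero: "ae_eq (\<lambda>u. cos (freq k * u)) (\<lambda>x. 0)"
  have "continuous_on J (\<lambda>u. cos (freq k * u))"
    by (intro continuous_intros)
  then have "cos (freq k * 0) = 0"
    using zero by (rule eq_0_if_continuous_on_ae_eq_0) simp
  then show False
    by simp
qed

lemma Top_cos_freq:
  assumes v: "v \<in> J"
  shows "Top (\<lambda>u. cos (freq k * u)) v = 1 / freq k * cos (freq k * v)"
proof -
  have half_pi: "freq k * (pi/2) = (2 * pi) * of_int k + pi/2"
    by (simp add: algebra_simps)
  have "sin (freq k * (pi/2)) = 1" "cos (freq k * (pi/2)) = 0"
    unfolding half_pi sin_add cos_add by simp_all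
  moreover have "freq k * (pi/2 - v) = freq k * (pi/2) - freq k * v"
    by (simp add: algebra_simps)
  ultimately have "sin (freq k * (pi/2 - v)) = cos (freq k * v)"
    by (simp only: sin_diff)
  moreover have "Top (\<lambda>u. cos (freq k * u)) v = sin (freq k * (pi/2 - v)) / freq k"
    using v by (simp add: Top_eq_integral cos_freq_L2 integral_cos_scaled freq_nonzero)
  ultimately show ?thesis
    by simp
qed

lemma Top_pow_cos_freq:
  "ae_eq ((Top ^^ n) (\<lambda>u. cos (freq k * u))) (\<lambda>x. 1 / freq k ^ n * cos (freq k * x))"
  using Top.pow_eigen[OF cos_freq_L2 ae_eq_if_eq_on_J[OF Top_cos_freq], where k = n]
  by (simp add: power_one_over)

lemma DERIV_reflect_J:
  assumes "(h has_real_derivative D) (at (pi/2 - v) within J)"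
  shows "((\<lambda>x. h (pi/2 - x)) has_real_derivative - D) (at v within J)"
proof -
  have "(\<lambda>x. pi/2 - x) ` J = J"
  proof
    show "J \<subseteq> (\<lambda>x. pi/2 - x) ` J"
    proof
      fix y
      assume "y \<in> J"
      then show "y \<in> (\<lambda>x. pi/2 - x) ` J"
        by (intro image_eqI[of _ _ "pi/2 - y"]) auto
    qed
  qed auto
  moreover have "((\<lambda>x. pi/2 - x) has_real_derivative -1) (at v within J)"
    by (auto intro!: derivative_eq_intros)
  ultimately have "(h \<circ> (\<lambda>x. pi/2 - x) has_real_derivative D * -1) (at v within J)"
    using assms by (intro DERIV_image_chain) simp_all
  then show ?thesis
    by (simp add: o_def)
qed

lemma Top_has_real_derivative:
  assumes g: "continuous_on J g" and v: "v \<in> J"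
  shows "(Top g has_real_derivative - g (pi/2 - v)) (at v within J)"
proof -
  have "((\<lambda>x. integral {0..x} g) has_real_derivative g (pi/2 - v)) (at (pi/2 - v) within J)"
    using v by (intro integral_has_real_derivative g) auto
  then have "((\<lambda>x. integral {0..pi/2 - x} g) has_real_derivative - g (pi/2 - v)) (at v within J)"
    by (rule DERIV_reflect_J)
  then show ?thesis
    by (rule has_field_derivative_transform_within[where d = 1])
      (use v continuous_on_imp_L2[OF g] in \<open>auto simp: Top_eq_integral\<close>)
qed

lemma Top_eigenfunction_has_real_derivative:
  assumes g: "continuous_on J g" and lam: "lam \<noteq> 0"
    and eigen: "\<And>v. v \<in> J \<Longrightarrow> Top g v = lam * g v" and t: "t \<in> J"
  shows "(g has_real_derivative - g (pi/2 - t) / lam) (at t within J)"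
proof -
  have "((\<lambda>x. Top g x / lam) has_real_derivative - g (pi/2 - t) / lam) (at t within J)"
    using DERIV_cdivide[OF Top_has_real_derivative[OF g t], of lam] by simp
  then show ?thesis
    by (rule has_field_derivative_transform_within[where d = 1]) (use t eigen lam in auto)
qed

lemma Top_eigenfunction_eq_cos:
  assumes g: "continuous_on J g" and lam: "lam \<noteq> 0"
    and eigen: "\<And>v. v \<in> J \<Longrightarrow> Top g v = lam * g v" and v: "v \<in> J"
  shows "g v = g 0 * cos (v / lam)"
proof -
  define w where "w = 1 / lam"
  have w: "w \<noteq> 0"
    using lam by (simp add: w_def)
  define p where "p t = - w * g (pi/2 - t)" for t
  have g': "(g has_real_derivative p t) (at t within J)" if "t \<in> J" for t
    using Top_eigenfunction_has_real_derivative[OF g lam eigen that] by (simp add: p_def w_def)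
  have p': "(p has_real_derivative - (w * w) * g t) (at t within J)" if "t \<in> J" for t
  proof -
    have "pi/2 - t \<in> J"
      using that by auto
    from DERIV_cmult[OF DERIV_reflect_J[OF g'[OF this]], of "- w"] show ?thesis
      by (simp add: p_def[abs_def] mult.assoc)
  qed
  have "g (pi/2) = 0"
    using eigen[of "pi/2"] lam continuous_on_imp_L2[OF g] by (simp add: Top_eq_integral)
  \<comment> \<open>The difference from the candidate solution solves y'' = -w^2 y with zero initial data.\<close>
  define y where "y t = g t - g 0 * cos (w * t)" for t
  define z where "z t = p t + g 0 * w * sin (w * t)" for t
  have "y v = 0"
  proof (rule harmonic_oscillator_zero[of J 0 w y z v])
    show "(y has_real_derivative z t) (at t within J)" if "t \<in> J" for t
      using that unfolding y_def[abs_def] z_def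
      by (auto intro!: derivative_eq_intros g' simp: algebra_simps)
    show "(z has_real_derivative - (w * w) * y t) (at t within J)" if "t \<in> J" for t
      using that unfolding y_def z_def[abs_def]
      by (auto intro!: derivative_eq_intros p' simp: algebra_simps)
  qed (use w v \<open>g (pi/2) = 0\<close> in \<open>simp_all add: y_def z_def p_def\<close>)
  then show ?thesis
    by (simp add: y_def w_def)
qed

lemma Top_eigenfunction_freq:
  assumes g: "continuous_on J g" and lam: "lam \<noteq> 0"
    and eigen: "\<And>v. v \<in> J \<Longrightarrow> Top g v = lam * g v" and g0: "g 0 \<noteq> 0"
  obtains k where "lam = 1 / freq k"
proof -
  have "Top g 0 = integral J g"
    using Top_eq_integral[OF continuous_on_imp_L2[OF g], of 0] by simp
  also have "\<dots> = integral J (\<lambda>u. g 0 * cos (1 / lam * u))"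
  proof (rule integral_cong)
    fix u
    assume "u \<in> J"
    from Top_eigenfunction_eq_cos[OF assms(1-3) this] show "g u = g 0 * cos (1 / lam * u)"
      by simp
  qed
  also have "\<dots> = g 0 * lam * sin (1 / lam * (pi / 2))"
    using integral_cos_scaled[of "1 / lam" "pi/2"] lam by simp
  finally have "sin (1 / lam * (pi / 2)) = 1"
    using eigen[of 0] g0 lam by simp
  then obtain k :: int where k: "1 / lam * (pi / 2) = (2 * k + 1/2) * pi"
    by (auto simp: sin_eq_1)
  have "1 / lam = (1 / lam * (pi / 2)) * (2 / pi)"
    by simp
  also have "\<dots> = freq k"
    unfolding k by (simp add: field_simps)
  finally have "1 / lam = freq k" .
  then have "lam = 1 / freq k"
    using freq_nonzero[of k] lam by (simp add: field_simps)
  then show thesis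
    by (rule that)
qed

lemma Top_eigenvector_continuous:
  assumes f: "f \<in> L2" and lam: "lam \<noteq> 0" and eigen: "ae_eq (Top f) (\<lambda>x. lam * f x)"
  obtains g where "continuous_on J g" "ae_eq g f" "\<And>v. v \<in> J \<Longrightarrow> Top g v = lam * g v"
proof
  define g where "g x = Top f x / lam" for x
  show "continuous_on J g"
    unfolding g_def[abs_def] by (intro continuous_intros continuous_on_Top f) (use lam in auto)
  show "ae_eq g f"
    using eigen lam unfolding ae_eq_def g_def by (elim eventually_mono) simp
  show "Top g v = lam * g v" if "v \<in> J" for v
  proof -
    have "Top g v = 1 / lam * Top (Top f) v"
      using Top_lincomb[OF Top_L2[OF f] Top_L2[OF f] that, of "1 / lam" 0]
      by (simp add: g_def[abs_def])
    also have "\<dots> = 1 / lam * Top (\<lambda>x. lam * f x) v"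
      using Top_ae_cong[OF Top_L2[OF f] L2_scale[OF f] eigen that] by simp
    also have "\<dots> = Top f v"
      using Top_lincomb[OF f f that, of lam 0] lam by simp
    finally show ?thesis
      using lam by (simp add: g_def)
  qed
qed

lemma Top_eigenvector:
  assumes f: "f \<in> L2" "\<not> ae_eq f (\<lambda>x. 0)"
    and lam: "lam \<noteq> 0" and eigen: "ae_eq (Top f) (\<lambda>x. lam * f x)"
  obtains k A where "lam = 1 / freq k" "ae_eq f (\<lambda>u. A * cos (freq k * u))"
proof -
  obtain g where g: "continuous_on J g" and "ae_eq g f"
    and g_eigen: "\<And>v. v \<in> J \<Longrightarrow> Top g v = lam * g v"
    using Top_eigenvector_continuous[OF f(1) lam eigen] by blast
  have "g 0 \<noteq> 0"
  proof
    assume "g 0 = 0"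
    have "ae_eq g (\<lambda>x. 0)"
    proof (rule ae_eq_if_eq_on_J)
      fix u
      assume "u \<in> J"
      from Top_eigenfunction_eq_cos[OF g lam g_eigen this] \<open>g 0 = 0\<close> show "g u = 0"
        by simp
    qed
    with f(2) show False
      using ae_eq_trans[OF ae_eq_sym[OF \<open>ae_eq g f\<close>]] by simp
  qed
  then obtain k where k: "lam = 1 / freq k"
    using Top_eigenfunction_freq[OF g lam g_eigen] by blast
  have "ae_eq g (\<lambda>u. g 0 * cos (freq k * u))"
  proof (rule ae_eq_if_eq_on_J)
    fix u
    assume "u \<in> J"
    from Top_eigenfunction_eq_cos[OF g lam g_eigen this] show "g u = g 0 * cos (freq k * u)"
      by (simp add: k mult.commute)
  qed
  with k show thesis
    using ae_eq_trans[OF ae_eq_sym[OF \<open>ae_eq g f\<close>]] by (intro that) simp_all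
qed

lemma eigenvalue_Top:
  assumes "eigenvalue_L2 Top c"
  obtains k where "c = 1 / freq k"
proof -
  obtain f where f: "f \<in> L2" "\<not> ae_eq f (\<lambda>x. 0)" and eigen: "ae_eq (Top f) (\<lambda>x. c * f x)"
    using assms unfolding eigenvalue_L2_def by blast
  have "c \<noteq> 0"
  proof
    assume "c = 0"
    then have "ae_eq f (\<lambda>x. 0)"
      using eigen by (intro Top_injective[OF f(1)]) simp
    with f(2) show False ..
  qed
  then obtain k A where "c = 1 / freq k" "ae_eq f (\<lambda>u. A * cos (freq k * u))"
    by (rule Top_eigenvector[OF f _ eigen])
  then show thesis
    by (intro that) simp
qed

lemma Top_no_opposite_eigenvalues:
  assumes "eigenvalue_L2 Top c"
  shows "\<not> eigenvalue_L2 Top (- c)"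
proof
  obtain k where k: "c = 1 / freq k"
    using assms by (rule eigenvalue_Top)
  assume "eigenvalue_L2 Top (- c)"
  then obtain k' where "- c = 1 / freq k'"
    by (rule eigenvalue_Top)
  with k have "c * freq k = 1" "c * freq k' = - 1"
    using freq_nonzero[of k] freq_nonzero[of k'] by (simp_all add: field_simps)
  then have "c * (freq k' + freq k) = 0" "c \<noteq> 0"
    by (auto simp: algebra_simps)
  then have "freq k' = - freq k"
    by simp
  then show False
    using freq_ne_neg by blast
qed

lemma Top_pow_eigenvector:
  assumes n: "n \<ge> 1" and f: "f \<in> L2" "\<not> ae_eq f (\<lambda>x. 0)"
    and eigen: "ae_eq ((Top ^^ n) f) (\<lambda>x. c * f x)"
  obtains k A where "c = 1 / freq k ^ n" "ae_eq f (\<lambda>u. A * cos (freq k * u))"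
proof -
  obtain lam where lam: "lam \<noteq> 0" "lam ^ n = c" "ae_eq (Top f) (\<lambda>x. lam * f x)"
    by (rule Top.pow_eigen_imp_eigen[OF Top_injective Top_no_opposite_eigenvalues n f eigen])
  obtain k A where k: "lam = 1 / freq k" "ae_eq f (\<lambda>u. A * cos (freq k * u))"
    by (rule Top_eigenvector[OF f lam(1,3)])
  have "c = 1 / freq k ^ n"
    using lam(2) k(1) by (simp add: power_one_over)
  from this k(2) show thesis
    by (rule that)
qed

lemma Top_pow_eigenspace:
  assumes n: "n \<ge> 1" and f: "f \<in> L2"
  shows "ae_eq ((Top ^^ n) f) (\<lambda>x. 1 / freq k ^ n * f x) \<longleftrightarrow>
    (\<exists>a. ae_eq f (\<lambda>u. a * cos (freq k * u)))"
proof
  assume eigen: "ae_eq ((Top ^^ n) f) (\<lambda>x. 1 / freq k ^ n * f x)"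
  show "\<exists>a. ae_eq f (\<lambda>u. a * cos (freq k * u))"
  proof (cases "ae_eq f (\<lambda>x. 0)")
    case True
    then show ?thesis
      by (intro exI[of _ 0]) simp
  next
    case False
    then obtain k' A where "1 / freq k ^ n = 1 / freq k' ^ n" "ae_eq f (\<lambda>u. A * cos (freq k' * u))"
      by (rule Top_pow_eigenvector[OF n f(1) _ eigen])
    moreover from this(1) have "k = k'"
      using n by (intro freq_pow_inj) simp_all
    ultimately show ?thesis
      by blast
  qed
next
  assume "\<exists>a. ae_eq f (\<lambda>u. a * cos (freq k * u))"
  then obtain a where a: "ae_eq f (\<lambda>u. a * cos (freq k * u))"
    by blast
  have "ae_eq ((Top ^^ n) f) ((Top ^^ n) (\<lambda>u. a * cos (freq k * u)))"
    using f a by (intro Top.pow_ae_cong L2_scale cos_freq_L2)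
  also have "ae_eq \<dots> (\<lambda>x. a * (Top ^^ n) (\<lambda>u. cos (freq k * u)) x)"
    by (rule Top.pow_scale[OF cos_freq_L2])
  also have "ae_eq \<dots> (\<lambda>x. 1 / freq k ^ n * (a * cos (freq k * x)))"
    using ae_eq_scale[OF Top_pow_cos_freq, of a] by (simp add: mult_ac)
  also have "ae_eq \<dots> (\<lambda>x. 1 / freq k ^ n * f x)"
    by (rule ae_eq_scale[OF ae_eq_sym[OF a]])
  finally show "ae_eq ((Top ^^ n) f) (\<lambda>x. 1 / freq k ^ n * f x)" .
qed

lemma eigenvalue_Top_pow_iff:
  assumes n: "n \<ge> 1"
  shows "eigenvalue_L2 (Top ^^ n) c \<longleftrightarrow> (\<exists>k. c = 1 / freq k ^ n)"
proof
  assume "eigenvalue_L2 (Top ^^ n) c"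
  then obtain f where "f \<in> L2" "\<not> ae_eq f (\<lambda>x. 0)" "ae_eq ((Top ^^ n) f) (\<lambda>x. c * f x)"
    by (auto simp: eigenvalue_L2_def)
  then obtain k A where "c = 1 / freq k ^ n"
    by (rule Top_pow_eigenvector[OF n])
  then show "\<exists>k. c = 1 / freq k ^ n" ..
next
  assume "\<exists>k. c = 1 / freq k ^ n"
  then show "eigenvalue_L2 (Top ^^ n) c"
    unfolding eigenvalue_L2_def using cos_freq_L2 cos_freq_not_ae_eq_0 Top_pow_cos_freq by blast
qed

section \<open>Compactness\<close>

lemma power2_norm_L2: "(norm_L2 f)\<^sup>2 = (\<integral>x. (f x)\<^sup>2 \<partial>I)"
  using inner_L2_self_nonneg[of f] unfolding norm_L2_def inner_L2_def by (simp add: power2_eq_square)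

lemma norm_L2_le_uniform:
  assumes D: "D \<in> L2" and bound: "\<And>x. x \<in> J \<Longrightarrow> \<bar>D x\<bar> \<le> e"
  shows "norm_L2 D \<le> e * sqrt (measure I J)"
proof -
  have "e \<ge> 0"
    using bound[of 0] by simp
  have "(\<integral>x. (D x)\<^sup>2 \<partial>I) \<le> (\<integral>x. e\<^sup>2 \<partial>I)"
  proof (rule integral_mono)
    show "integrable I (\<lambda>x. (D x)\<^sup>2)"
      using D by (rule L2D)
    show "(D x)\<^sup>2 \<le> e\<^sup>2" if "x \<in> space I" for x
      using power_mono[OF bound abs_ge_zero, of x 2] that by simp
  qed simp
  then have "(norm_L2 D)\<^sup>2 \<le> (e * sqrt (measure I J))\<^sup>2"
    by (simp add: power2_norm_L2 power_mult_distrib mult.commute)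
  then show ?thesis
    using \<open>e \<ge> 0\<close> by (simp add: power2_le_iff_abs_le)
qed

lemma abs_integral_le_L2:
  assumes f: "f \<in> L2" and M: "(\<integral>x. (f x)\<^sup>2 \<partial>I) \<le> M"
    and cd: "0 \<le> c" "c \<le> d" "d \<le> pi/2" and t: "t > 0"
  shows "2 * \<bar>integral {c..d} f\<bar> \<le> t * M + (d - c) / t"
proof -
  have sub: "{c..d} \<subseteq> J"
    using cd by auto
  have f2: "(\<lambda>x. (f x)\<^sup>2) integrable_on {a..b}" if "{a..b} \<subseteq> J" for a b
    using integrable_I_imp_absolutely_integrable_on[OF L2D(2)[OF f] that]
    by (simp add: set_lebesgue_integral_eq_integral(1))
  have "norm (integral {c..d} (\<lambda>x. 2 * f x)) \<le> integral {c..d} (\<lambda>x. t * (f x)\<^sup>2 + 1 / t)"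
  proof (rule integral_norm_bound_integral)
    show "(\<lambda>x. 2 * f x) integrable_on {c..d}"
      using f sub by (intro integrable_on_mult_right integrable_on_L2)
    show "(\<lambda>x. t * (f x)\<^sup>2 + 1 / t) integrable_on {c..d}"
      using f2[OF sub] by (intro integrable_add integrable_on_mult_right integrable_const_ivl)
    show "norm (2 * f x) \<le> t * (f x)\<^sup>2 + 1 / t" for x
    proof -
      have "2 * (t * \<bar>f x\<bar>) \<le> (t * \<bar>f x\<bar>)\<^sup>2 + 1"
        using sum_squares_bound[of "t * \<bar>f x\<bar>" 1] by simp
      then show ?thesis
        using t by (simp add: field_simps power2_eq_square abs_mult)
    qed
  qed
  also have "\<dots> = t * integral {c..d} (\<lambda>x. (f x)\<^sup>2) + (d - c) / t"
    using f2[OF sub] cd by (subst integral_add) (simp_all add: integrable_on_mult_right integrable_const_ivl)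
  finally have "\<bar>2 * integral {c..d} f\<bar> \<le> t * integral {c..d} (\<lambda>x. (f x)\<^sup>2) + (d - c) / t"
    by simp
  moreover have "integral {c..d} (\<lambda>x. (f x)\<^sup>2) \<le> integral J (\<lambda>x. (f x)\<^sup>2)"
    using sub f2[OF sub] f2[of 0 "pi/2"] by (intro integral_subset_le) simp_all
  moreover have "integral J (\<lambda>x. (f x)\<^sup>2) = (\<integral>x. (f x)\<^sup>2 \<partial>I)"
    using L2D(2)[OF f] by (intro lebesgue_integral_eq_integral[symmetric]) simp_all
  ultimately show ?thesis
    using M t mult_left_mono[of "integral {c..d} (\<lambda>x. (f x)\<^sup>2)" M t] abs_mult[of 2 "integral {c..d} f"]
    by linarith
qed

lemma abs_Top_diff_le:
  assumes f: "f \<in> L2" and M: "(\<integral>x. (f x)\<^sup>2 \<partial>I) \<le> M"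
    and v: "v \<in> J" "v' \<in> J" and t: "t > 0"
  shows "2 * \<bar>Top f v - Top f v'\<bar> \<le> t * M + \<bar>v - v'\<bar> / t"
proof -
  have *: "2 * \<bar>Top f a - Top f b\<bar> \<le> t * M + (b - a) / t" if "a \<in> J" "b \<in> J" "a \<le> b" for a b
  proof -
    have "integral {0..pi/2 - b} f + integral {pi/2 - b..pi/2 - a} f = integral {0..pi/2 - a} f"
      using that f by (intro Henstock_Kurzweil_Integration.integral_combine integrable_on_L2) auto
    then have "Top f a - Top f b = integral {pi/2 - b..pi/2 - a} f"
      using that f by (simp add: Top_eq_integral)
    moreover have "2 * \<bar>integral {pi/2 - b..pi/2 - a} f\<bar> \<le> t * M + ((pi/2 - a) - (pi/2 - b)) / t"
      using that f M t by (intro abs_integral_le_L2) auto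
    ultimately show ?thesis
      by simp
  qed
  show ?thesis
  proof (cases "v \<le> v'")
    case True
    then show ?thesis
      using *[OF v True] by simp
  next
    case False
    then show ?thesis
      using *[OF v(2,1)] by (simp add: abs_minus_commute)
  qed
qed

lemma abs_Top_le:
  assumes f: "f \<in> L2" and M: "(\<integral>x. (f x)\<^sup>2 \<partial>I) \<le> M" and v: "v \<in> J"
  shows "\<bar>Top f v\<bar> \<le> (M + 2) / 2"
proof -
  have "2 * \<bar>integral {0..pi/2 - v} f\<bar> \<le> 1 * M + (pi/2 - v - 0) / 1"
    using f M v by (intro abs_integral_le_L2) auto
  moreover have "pi/2 - v \<le> 2"
    using pi_less_4 v by simp
  ultimately show ?thesis
    using f v by (simp add: Top_eq_integral)
qed

lemma Top_equicontinuous: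
  fixes F :: "nat \<Rightarrow> real \<Rightarrow> real"
  assumes F: "\<And>k. F k \<in> L2" and M: "\<And>k. (\<integral>x. (F k x)\<^sup>2 \<partial>I) \<le> M"
    and x: "x \<in> J" and e: "e > 0"
  shows "\<exists>d>0. \<forall>k y. y \<in> J \<and> norm (x - y) < d \<longrightarrow> norm (Top (F k) x - Top (F k) y) < e"
proof -
  have "0 \<le> (\<integral>x. (F 0 x)\<^sup>2 \<partial>I)"
    by (intro integral_nonneg_AE) simp
  then have "M \<ge> 0"
    using M[of 0] by linarith
  define t where "t = e / (M + 1)"
  have t: "t > 0" "t * M < e"
    using \<open>M \<ge> 0\<close> e by (simp_all add: t_def field_simps)
  have "norm (Top (F k) x - Top (F k) y) < e" if "y \<in> J" "norm (x - y) < e * t" for k y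
  proof -
    have "\<bar>x - y\<bar> / t < e"
      using that(2) t(1) by (simp add: divide_less_eq)
    then show ?thesis
      using abs_Top_diff_le[OF F M x that(1) t(1), of k] t(2) by simp
  qed
  then show ?thesis
    using e t(1) by (intro exI[of _ "e * t"]) auto
qed

lemma Top_uniformly_convergent_subseq:
  fixes F :: "nat \<Rightarrow> real \<Rightarrow> real"
  assumes F: "\<And>k. F k \<in> L2" and M: "\<And>k. (\<integral>x. (F k x)\<^sup>2 \<partial>I) \<le> M"
  shows "\<exists>g r. continuous_on J g \<and> strict_mono (r :: nat \<Rightarrow> nat) \<and>
    (\<forall>e>0. \<exists>N. \<forall>k\<ge>N. \<forall>x\<in>J. \<bar>Top (F (r k)) x - g x\<bar> < e)"
proof -
  have bound: "norm (Top (F k) x) \<le> (M + 2) / 2" if "x \<in> J" for k x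
    using abs_Top_le[OF F M that] by simp
  show ?thesis
  proof (rule Arzela_Ascoli[OF compact_Icc bound Top_equicontinuous[OF F M]])
    fix g :: "real \<Rightarrow> real" and r :: "nat \<Rightarrow> nat"
    assume g: "continuous_on J g" and r: "strict_mono r"
      and conv: "\<And>e. 0 < e \<Longrightarrow> \<exists>N. \<forall>k x. k \<ge> N \<and> x \<in> J \<longrightarrow> norm (Top (F (r k)) x - g x) < e"
    have "\<forall>e>0. \<exists>N. \<forall>k\<ge>N. \<forall>x\<in>J. \<bar>Top (F (r k)) x - g x\<bar> < e"
    proof (intro allI impI)
      fix e :: real
      assume "e > 0"
      then obtain N where "\<forall>k x. k \<ge> N \<and> x \<in> J \<longrightarrow> norm (Top (F (r k)) x - g x) < e"
        using conv by blast
      then show "\<exists>N. \<forall>k\<ge>N. \<forall>x\<in>J. \<bar>Top (F (r k)) x - g x\<bar> < e"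
        by force
    qed
    with g r show ?thesis
      by blast
  qed
qed

lemma Top_compact:
  fixes F :: "nat \<Rightarrow> real \<Rightarrow> real"
  assumes F: "\<And>k. F k \<in> L2" and M: "\<And>k. (\<integral>x. (F k x)\<^sup>2 \<partial>I) \<le> M"
  shows "\<exists>r g. strict_mono r \<and> g \<in> L2 \<and> (\<lambda>k. norm_L2 (\<lambda>x. Top (F (r k)) x - g x)) \<longlonglongrightarrow> 0"
proof -
  obtain g r where g: "continuous_on J g" and r: "strict_mono (r :: nat \<Rightarrow> nat)"
    and unif: "\<forall>e>0. \<exists>N. \<forall>k\<ge>N. \<forall>x\<in>J. \<bar>Top (F (r k)) x - g x\<bar> < e"
    using Top_uniformly_convergent_subseq[of F M, OF F M] by blast
  define C where "C = sqrt (measure I J)"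
  have "C \<ge> 0"
    by (simp add: C_def)
  have "(\<lambda>k. norm_L2 (\<lambda>x. Top (F (r k)) x - g x)) \<longlonglongrightarrow> 0"
  proof (rule LIMSEQ_I)
    fix \<epsilon> :: real
    assume "\<epsilon> > 0"
    then have "\<epsilon> / (C + 1) > 0"
      using \<open>C \<ge> 0\<close> by simp
    then obtain N where N: "\<And>k x. k \<ge> N \<Longrightarrow> x \<in> J \<Longrightarrow> \<bar>Top (F (r k)) x - g x\<bar> < \<epsilon> / (C + 1)"
      using unif by blast
    have "norm (norm_L2 (\<lambda>x. Top (F (r k)) x - g x) - 0) < \<epsilon>" if "k \<ge> N" for k
    proof -
      have "(\<lambda>x. 1 * Top (F (r k)) x + (- 1) * g x) \<in> L2"
        using Top_L2[OF F] continuous_on_imp_L2[OF g] by (rule L2_lincomb)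
      then have "norm_L2 (\<lambda>x. Top (F (r k)) x - g x) \<le> \<epsilon> / (C + 1) * sqrt (measure I J)"
        using N[OF that] by (intro norm_L2_le_uniform) (simp_all add: less_imp_le)
      also have "\<dots> = \<epsilon> / (C + 1) * C"
        by (simp add: C_def)
      also have "\<dots> < \<epsilon>"
        using \<open>\<epsilon> > 0\<close> \<open>C \<ge> 0\<close> by (simp add: field_simps)
      finally show ?thesis
        using inner_L2_self_nonneg by (simp add: norm_L2_def)
    qed
    then show "\<exists>N. \<forall>k\<ge>N. norm (norm_L2 (\<lambda>x. Top (F (r k)) x - g x) - 0) < \<epsilon>"
      by blast
  qed
  then show ?thesis
    using r continuous_on_imp_L2[OF g] by blast
qed

lemma square_integral_Top_le:
  assumes f: "f \<in> L2" and M: "(\<integral>x. (f x)\<^sup>2 \<partial>I) \<le> M"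
  shows "(\<integral>x. (Top f x)\<^sup>2 \<partial>I) \<le> ((M + 2) / 2)\<^sup>2 * measure I J"
proof -
  have "(\<integral>x. (Top f x)\<^sup>2 \<partial>I) \<le> (\<integral>x. ((M + 2) / 2)\<^sup>2 \<partial>I)"
  proof (rule integral_mono)
    show "integrable I (\<lambda>x. (Top f x)\<^sup>2)"
      using Top_L2[OF f] by (rule L2D)
    show "(Top f x)\<^sup>2 \<le> ((M + 2) / 2)\<^sup>2" if "x \<in> space I" for x
      using power_mono[OF abs_Top_le[OF f M] abs_ge_zero, of x 2] that by simp
  qed simp
  then show ?thesis
    by (simp add: mult.commute)
qed

lemma compact_op_L2_Top_pow:
  assumes n: "n \<ge> 1"
  shows "compact_op_L2 (Top ^^ n)"
  unfolding compact_op_L2_def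
proof (intro conjI ballI allI impI)
  fix F :: "nat \<Rightarrow> real \<Rightarrow> real"
  assume "(\<forall>k. F k \<in> L2) \<and> bounded (range (\<lambda>k. norm_L2 (F k)))"
  then obtain B where F: "\<And>k. F k \<in> L2" and B: "\<And>k. \<bar>norm_L2 (F k)\<bar> \<le> B"
    by (auto simp: bounded_real)
  obtain m where m: "n = Suc m"
    using n by (cases n) auto
  \<comment> \<open>Top ^^ n = Top \<circ> Top ^^ m, and Top ^^ m maps the L2-bounded sequence F to an L2-bounded one.\<close>
  have "\<exists>M. \<forall>k. (\<integral>x. ((Top ^^ j) (F k) x)\<^sup>2 \<partial>I) \<le> M" for j
  proof (induction j)
    case 0
    have "(\<integral>x. (F k x)\<^sup>2 \<partial>I) \<le> B\<^sup>2" for k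
      using power_mono[OF B abs_ge_zero, of k 2] by (simp add: power2_norm_L2)
    then show ?case
      by auto
  next
    case (Suc j)
    then obtain M where "\<And>k. (\<integral>x. ((Top ^^ j) (F k) x)\<^sup>2 \<partial>I) \<le> M"
      by blast
    then have "\<forall>k. (\<integral>x. ((Top ^^ Suc j) (F k) x)\<^sup>2 \<partial>I) \<le> ((M + 2) / 2)\<^sup>2 * measure I J"
      using square_integral_Top_le[OF Top.pow_L2_closed[OF F]] by simp
    then show ?case
      by blast
  qed
  then obtain M where "\<And>k. (\<integral>x. ((Top ^^ m) (F k) x)\<^sup>2 \<partial>I) \<le> M"
    by blast
  from Top_compact[OF Top.pow_L2_closed[OF F] this]
  show "\<exists>r g. strict_mono r \<and> g \<in> L2 \<and> (\<lambda>k. norm_L2 (\<lambda>x. (Top ^^ n) (F (r k)) x - g x)) \<longlonglongrightarrow> 0"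
    by (simp add: m)
qed (simp_all add: Top.pow_L2_closed Top.pow_lincomb Top.pow_ae_cong)

theorem corollary3p1:
  fixes n :: nat
  assumes "n \<ge> 1"
  shows "compact_op_L2 (Top ^^ n) \<and> self_adjoint_L2 (Top ^^ n) \<and>
    {c. eigenvalue_L2 (Top ^^ n) c} = {1 / (4 * of_int k + 1) ^ n | k :: int. True} \<and>
    (\<forall>k :: int.
       (\<lambda>u. cos ((4 * of_int k + 1) * u)) \<in> L2 \<and>
       \<not> ae_eq (\<lambda>u. cos ((4 * of_int k + 1) * u)) (\<lambda>x. 0) \<and>
       (\<forall>f\<in>L2. ae_eq ((Top ^^ n) f) (\<lambda>x. (1 / (4 * of_int k + 1) ^ n) * f x) \<longleftrightarrow>
                (\<exists>a. ae_eq f (\<lambda>u. a * cos ((4 * of_int k + 1) * u)))))"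
proof -
  have "self_adjoint_L2 (Top ^^ n)"
    unfolding self_adjoint_L2_def by (simp add: Top.pow_self_adjoint)
  moreover have "{c. eigenvalue_L2 (Top ^^ n) c} = {1 / freq k ^ n | k. True}"
    using eigenvalue_Top_pow_iff[OF assms] by blast
  ultimately show ?thesis
    using compact_op_L2_Top_pow[OF assms] cos_freq_L2 cos_freq_not_ae_eq_0
      Top_pow_eigenspace[OF assms] by blast
qed

end
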